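(* Let $K>0$, $S=1/K$, let $\eta:(0,K]\to[0,\infty)$ with $\eta(K)=0$, set $\phi(k)=k\eta(k)$ ($\phi(0)=0$) and $\theta(s)=\eta(1/s)$ for $s\ge S$, and let $\Psi:\mathbb{R}^3\to\mathbb{R}$ be arbitrary. Let $\Delta t,\Delta N>0$ satisfy $$\frac{\Delta N}{\Delta t}\ge\sup_{k\in[0,K)}\frac{\phi(k)}{1-k/K}.$$ Consider vehicles $N$ with leaders $N-\Delta N$, where the first (lead) vehicle follows a prescribed trajectory that is non-decreasing in time, and every other vehicle has arbitrary initial speed and is updated by $$X_t(t+\Delta t,N)=\max\Big\{0,\ \min\Big\{\theta\Big(\tfrac{X(t,N-\Delta N)-X(t,N)}{\Delta N}\Big),\ X_t(t,N)+\Delta t\,A(t,N)\Big\}\Big\},$$ $$X(t+\Delta t,N)=\max\Big\{X(t,N),\ \min\Big\{X(t,N)+\Delta t\,\theta\Big(\tfrac{X(t,N-\Delta N)-X(t,N)}{\Delta N}\Big),\ X(t,N)+\Delta t\,X_t(t,N)+\Delta t^2A(t,N)\Big\}\Big\},$$ with $$A(t,N)=\Psi\Big(X_t(t,N),\ \tfrac{X(t,N-\Delta N)-X(t,N)}{\Delta N},\ \tfrac{X_t(t,N)-X_t(t,N-\Delta N)}{\Delta N}\Big).$$ If initially all spacings satisfy $X(0,N-\Delta N)-X(0,N)\ge S\Delta N$, then the model is forward-traveling and collision-free: for all time steps, $X_t(t+\Delta t,N)\ge 0$ and $X(t,N-\Delta N)-X(t,N)\ge S\Delta N$ for every following vehicle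 $N$.
   Context: This is the car-following form of a general second-order traffic model $v_t+vv_x=\Psi(v,1/k,v_x/k)$ after a correction that caps the acceleration. $X(t,N)$ is the location and $X_t(t,N)$ the speed at time $t$ of vehicle $N$; $\eta$ is the speed-density relation, $\phi$ the flow-density relation, $\theta$ the speed-spacing relation, $K$ the jam density, $S$ the jam spacing. Forward-traveling means speeds are never negative; collision-free means spacings never fall below $S\Delta N$. *)

theory Defs
  imports Main Complex_Main
begin

definition flow :: "(real \<Rightarrow> real) \<Rightarrow> real \<Rightarrow> real" where
  "flow eta k = (if k = 0 then 0 else k * eta k)"

definition spd :: "(real \<Rightarrow> real) \<Rightarrow> real \<Rightarrow> real" where
  "spd eta s = eta (1 / s)"

text \<open>Acceleration A(t,N) for vehicle i (leader i-1) at time step n.\<close>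
definition accel ::
  "(real \<Rightarrow> real \<Rightarrow> real \<Rightarrow> real) \<Rightarrow> real \<Rightarrow> (nat \<Rightarrow> nat \<Rightarrow> real) \<Rightarrow> (nat \<Rightarrow> nat \<Rightarrow> real)
     \<Rightarrow> nat \<Rightarrow> nat \<Rightarrow> real" where
  "accel Psi dN X V n i =
     Psi (V n i) ((X n (i - 1) - X n i) / dN) ((V n i - V n (i - 1)) / dN)"

end

theory Submission
  imports Defs
begin

text \<open>The CFL-type condition on \<open>\<Delta>N/\<Delta>t\<close> says exactly that a vehicle at spacing \<open>s \<ge> S\<close>
  driving at its equilibrium speed \<open>\<theta>(s)\<close> for one time step covers at most the excess spacing
  \<open>(s - S)\<Delta>N\<close>. Every position update is capped by that equilibrium move, while leaders never
  move backwards, so the spacing bound \<open>S\<Delta>N\<close> propagates by induction over time.\<close>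

lemma cfl_displacement_le:
  fixes k K e dt dN :: real
  assumes "0 < k" "k < K" "0 < dt" "k * e / (1 - k / K) \<le> dN / dt"
  shows "dt * e \<le> dN * (1 / k - 1 / K)"
proof -
  have "0 < 1 - k / K" using assms(1,2) by simp
  then have "dt * (k * e) \<le> dN * (1 - k / K)"
    using assms(3,4) by (simp add: field_simps)
  also have "\<dots> = k * (dN * (1 / k - 1 / K))" using assms(1) by (simp add: field_simps)
  finally show ?thesis using assms(1) by (simp add: ac_simps)
qed

lemma spd_nonneg_and_displacement_le:
  fixes K dt dN s :: real and eta :: "real \<Rightarrow> real"
  assumes K_pos: "0 < K"
    and eta_nonneg: "\<And>k. 0 < k \<Longrightarrow> k \<le> K \<Longrightarrow> 0 \<le> eta k"
    and eta_K: "eta K = 0"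
    and dt_pos: "0 < dt"
    and cfl: "\<And>k. 0 \<le> k \<Longrightarrow> k < K \<Longrightarrow> flow eta k / (1 - k / K) \<le> dN / dt"
    and s_ge: "1 / K \<le> s"
  shows "0 \<le> spd eta s \<and> dt * spd eta s \<le> dN * (s - 1 / K)"
proof -
  define k where "k = 1 / s"
  have s_pos: "0 < s" using s_ge K_pos by (smt (verit) zero_less_divide_1_iff)
  have k_pos: "0 < k" using s_pos by (simp add: k_def)
  have k_le: "k \<le> K"
    using s_ge s_pos K_pos by (simp add: k_def divide_le_eq mult.commute)
  have s_eq: "s = 1 / k" using s_pos by (simp add: k_def)
  have spd_eq: "spd eta s = eta k" by (simp add: spd_def k_def)
  show ?thesis
  proof (cases "k = K")
    case True
    then show ?thesis using eta_K s_eq spd_eq by simp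
  next
    case False
    with k_le have "k < K" by simp
    moreover have "k * eta k / (1 - k / K) \<le> dN / dt"
      using cfl[of k] k_pos \<open>k < K\<close> by (simp add: flow_def)
    ultimately have "dt * eta k \<le> dN * (1 / k - 1 / K)"
      using cfl_displacement_le k_pos dt_pos by blast
    then show ?thesis using eta_nonneg k_pos k_le s_eq spd_eq by simp
  qed
qed

lemma capped_update_preserves_spacing:
  fixes lead lead' x x' y d dN S :: real
  assumes "lead \<le> lead'" "0 \<le> d" "d \<le> dN * ((lead - x) / dN - S)" "0 < dN"
    and "x' = max x (min (x + d) y)"
  shows "S * dN \<le> lead' - x'"
proof -
  have "x' \<le> x + d" using assms(2,5) by simp
  moreover have "dN * ((lead - x) / dN - S) = lead - x - S * dN"
    using assms(4) by (simp add: field_simps)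
  ultimately show ?thesis using assms(1,3) by linarith
qed

theorem theorem6p1:
  fixes K dt dN :: real
    and eta :: "real \<Rightarrow> real"
    and Psi :: "real \<Rightarrow> real \<Rightarrow> real \<Rightarrow> real"
    and X V :: "nat \<Rightarrow> nat \<Rightarrow> real"
  assumes K_pos: "K > 0"
    and eta_nonneg: "\<And>k. 0 < k \<Longrightarrow> k \<le> K \<Longrightarrow> eta k \<ge> 0"
    and eta_K: "eta K = 0"
    and dt_pos: "dt > 0" and dN_pos: "dN > 0"
    and cfl: "\<And>k. 0 \<le> k \<Longrightarrow> k < K \<Longrightarrow> flow eta k / (1 - k / K) \<le> dN / dt"
    and lead_mono: "\<And>n. X n 0 \<le> X (Suc n) 0"
    and speed_upd: "\<And>n i. i \<ge> 1 \<Longrightarrow>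
       V (Suc n) i = max 0 (min (spd eta ((X n (i - 1) - X n i) / dN))
                                (V n i + dt * accel Psi dN X V n i))"
    and pos_upd: "\<And>n i. i \<ge> 1 \<Longrightarrow>
       X (Suc n) i = max (X n i) (min (X n i + dt * spd eta ((X n (i - 1) - X n i) / dN))
                                      (X n i + dt * V n i + dt\<^sup>2 * accel Psi dN X V n i))"
    and init_spacing: "\<And>i. i \<ge> 1 \<Longrightarrow> X 0 (i - 1) - X 0 i \<ge> (1 / K) * dN"
  shows "\<forall>n i. i \<ge> 1 \<longrightarrow> V (Suc n) i \<ge> 0 \<and> X n (i - 1) - X n i \<ge> (1 / K) * dN"
proof -
  have forward: "X n j \<le> X (Suc n) j" for n j
    using lead_mono[of n] pos_upd[of j n] by (cases j) auto
  have spacing: "(1 / K) * dN \<le> X n (i - 1) - X n i" if "1 \<le> i" for n i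
  proof (induction n)
    case 0
    show ?case using init_spacing[OF that] .
  next
    case (Suc n)
    define s where "s = (X n (i - 1) - X n i) / dN"
    have "1 / K \<le> s" using Suc.IH dN_pos by (simp add: s_def field_simps)
    then have "0 \<le> dt * spd eta s \<and> dt * spd eta s \<le> dN * (s - 1 / K)"
      using spd_nonneg_and_displacement_le[OF K_pos eta_nonneg eta_K dt_pos cfl] dt_pos
      by simp
    then have "(1 / K) * dN \<le> X (Suc n) (i - 1) - X (Suc n) i"
      using capped_update_preserves_spacing[OF forward _ _ dN_pos pos_upd[OF that]] unfolding s_def by blast
    then show ?case .
  qed
  show ?thesis using spacing speed_upd by simp
qed

end
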